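(* Assume (A), (R), (S) and let $c=(c_k)$ and $d=(d_k)$ be global solutions of (E) (with initial data in $\ell^1_1$). Then for each $\mu\ge1$, $$\frac{d}{dt}\sum_{k=1}^\infty k^\mu|c_k-d_k|\le\Bigl(2A_*(C_\mu+2)\sum_{\ell=1}^\infty\ell^{\mu+\beta}(c_\ell+d_\ell)-R_*\Bigr)\sum_{k=1}^\infty k^\mu|c_k-d_k|\quad\text{for all }t>0,$$ where $C_\mu=2^{\max\{\mu-2,0\}}\max\{\mu,\mu(\mu-1)\}$.
   Context: Throughout, $\mathbb N=\{1,2,\dots\}$. We consider the forced discrete coagulation equation $$\frac{d}{dt}c_k=\frac12\sum_{\ell=1}^{k-1}a_{k-\ell,\ell}c_{k-\ell}c_\ell-c_k\sum_{\ell=1}^{\infty}a_{k,\ell}c_\ell+s_k-r_kc_k,\qquad k\in\mathbb N,\tag{E}$$ with real coefficients satisfying the standing assumptions: (A) $a_{k,\ell}=a_{\ell,k}$ and $0\le a_{k,\ell}\le A_*(k^\alpha\ell^\beta+k^\beta\ell^\alpha)$ for all $k,\ell\in\mathbb N$, with constants $A_*>0$, $\alpha,\beta\in[0,1]$, $\alpha\le\beta$; (R) $r_k\ge R_*k^\gamma$ for all $k\in\mathbb N$, with $R_*>0$ and $\gamma>\max\{0,\alpha+\beta-1\}$; (S) $s_k\ge 0$ for all $k$, and for every $\mu\ge0$ there is $\mathfrak s_\mu>0$ with $\sum_{k\ge1}k^\mu s_k\le\mathfrak s_\mu$. For $\mu\ge0$, $\ell^1_\mu$ is the set of sequences $(c_k)_{k\in\mathbb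 N}$ with $c_k\in[0,\infty)$ and $\sum_k k^\mu c_k<\infty$. Solution: a sequence $c=(c_k)_{k\in\mathbb N}$ of continuous functions $c_k:[0,T)\to[0,\infty)$ is a solution of (E) on $[0,T)$ with initial condition $c^{\mathrm{in}}\in\ell^1_1$ if (i) for each $k$, (E) holds for all $t\in(0,T)$; (ii) for each $\mu\ge1$, $c\in L^\infty([0,T),\ell^1_1)\cap C^1((0,T),\ell^1_\mu)$; (iii) $c_k(0)=c_k^{\mathrm{in}}$ for all $k$. It is a global solution if $T=\infty$. *)

theory Defs
  imports "HOL-Analysis.Analysis"
begin

text \<open>Sequences are indexed by nat; only indices k \<ge> 1 are meaningful (index 0 is ignored).
  A time-dependent sequence is c :: nat \<Rightarrow> real \<Rightarrow> real, c k t = c_k(t).\<close>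

definition wsummable :: "real \<Rightarrow> (nat \<Rightarrow> real) \<Rightarrow> bool" where
  "wsummable \<mu> x \<longleftrightarrow> summable (\<lambda>k. real (Suc k) powr \<mu> * \<bar>x (Suc k)\<bar>)"

definition wnorm :: "real \<Rightarrow> (nat \<Rightarrow> real) \<Rightarrow> real" where
  "wnorm \<mu> x = (\<Sum>k. real (Suc k) powr \<mu> * \<bar>x (Suc k)\<bar>)"

definition coag_rhs ::
  "(nat \<Rightarrow> nat \<Rightarrow> real) \<Rightarrow> (nat \<Rightarrow> real) \<Rightarrow> (nat \<Rightarrow> real) \<Rightarrow> (nat \<Rightarrow> real \<Rightarrow> real) \<Rightarrow> nat \<Rightarrow> real \<Rightarrow> real" where
  "coag_rhs a s r c k t =
     (1/2) * (\<Sum>l=1..k-1. a (k-l) l * c (k-l) t * c l t)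
     - c k t * (\<Sum>l. a k (Suc l) * c (Suc l) t)
     + s k - r k * c k t"

definition is_global_solution ::
  "(nat \<Rightarrow> nat \<Rightarrow> real) \<Rightarrow> (nat \<Rightarrow> real) \<Rightarrow> (nat \<Rightarrow> real) \<Rightarrow> (nat \<Rightarrow> real \<Rightarrow> real) \<Rightarrow> bool" where
  "is_global_solution a s r c \<longleftrightarrow>
     (\<forall>k\<ge>1. continuous_on {0..} (c k) \<and> (\<forall>t\<ge>0. c k t \<ge> 0))
   \<and> (\<forall>k\<ge>1. \<forall>t>0. (c k has_real_derivative coag_rhs a s r c k t) (at t))
   \<and> (\<exists>M. \<forall>t\<ge>0. wsummable 1 (\<lambda>k. c k t) \<and> wnorm 1 (\<lambda>k. c k t) \<le> M)
   \<and> (\<forall>\<mu>\<ge>1. \<exists>c'. \<forall>t>0.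
          wsummable \<mu> (\<lambda>k. c k t) \<and> wsummable \<mu> (\<lambda>k. c' k t)
        \<and> ((\<lambda>h. wnorm \<mu> (\<lambda>k. (c k h - c k t) / (h - t) - c' k t)) \<longlongrightarrow> 0) (at t)
        \<and> ((\<lambda>h. wnorm \<mu> (\<lambda>k. c' k h - c' k t)) \<longlongrightarrow> 0) (at t))"

definition upper_right_dini :: "(real \<Rightarrow> real) \<Rightarrow> real \<Rightarrow> ereal" where
  "upper_right_dini F t = Limsup (at_right t) (\<lambda>h. ereal ((F h - F t) / (h - t)))"

end

theory Submission
  imports Defs
begin

text \<open>
  Write \<open>N(t) = \<Sum>\<^sub>k k\<^sup>\<mu> \<bar>c\<^sub>k - d\<^sub>k\<bar>\<close>. Because the difference quotients of \<open>c\<close> and \<open>d\<close> converge in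
  the weighted norm, the right Dini derivative of \<open>N\<close> is \<open>\<Sum>\<^sub>k k\<^sup>\<mu> \<sigma>\<^sub>k (c\<^sub>k' - d\<^sub>k')\<close>, where \<open>\<sigma>\<^sub>k\<close> is
  the sign of \<open>c\<^sub>k - d\<^sub>k\<close> (and of \<open>c\<^sub>k' - d\<^sub>k'\<close> where \<open>c\<^sub>k = d\<^sub>k\<close>). Testing the difference of the
  right-hand sides of (E) against \<open>\<phi>\<^sub>k = k\<^sup>\<mu> \<sigma>\<^sub>k\<close> gives, after the source terms cancel,
  \<open>\<onehalf> \<Sum>\<^sub>i\<^sub>,\<^sub>j a\<^sub>i\<^sub>j (c\<^sub>i c\<^sub>j - d\<^sub>i d\<^sub>j) (\<phi>\<^sub>i\<^sub>+\<^sub>j - \<phi>\<^sub>i - \<phi>\<^sub>j) - \<Sum>\<^sub>k r\<^sub>k k\<^sup>\<mu> \<bar>c\<^sub>k - d\<^sub>k\<bar>\<close>.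
  Splitting \<open>c\<^sub>i c\<^sub>j - d\<^sub>i d\<^sub>j = \<onehalf> ((c\<^sub>i - d\<^sub>i)(c\<^sub>j + d\<^sub>j) + (c\<^sub>i + d\<^sub>i)(c\<^sub>j - d\<^sub>j))\<close>, the increment
  \<open>(i + j)\<^sup>\<mu> - i\<^sup>\<mu> + j\<^sup>\<mu> \<le> (\<mu> 2\<^sup>\<mu>\<^sup>-\<^sup>1 + 1) i\<^sup>\<mu>\<^sup>-\<^sup>1 j\<^sup>\<mu>\<close> and \<open>a\<^sub>i\<^sub>j \<le> 2 A\<^sub>* i\<^sup>\<beta> j\<^sup>\<beta>\<close> bound the
  coagulation part by \<open>A\<^sub>* (\<mu> 2\<^sup>\<mu>\<^sup>-\<^sup>1 + 1) (\<Sum>\<^sub>l l\<^sup>\<mu>\<^sup>+\<^sup>\<beta> (c\<^sub>l + d\<^sub>l)) N\<close>, while \<open>r\<^sub>k \<ge> R\<^sub>*\<close> bounds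
  the removal part by \<open>-R\<^sub>* N\<close>; finally \<open>\<mu> 2\<^sup>\<mu>\<^sup>-\<^sup>1 + 1 \<le> 2 (C\<^sub>\<mu> + 2)\<close>.
\<close>

section \<open>Elementary inequalities\<close>

lemma powr_add_minus_powr_le:
  fixes x h \<mu> :: real
  assumes "x > 0" "h > 0" "\<mu> \<ge> 1"
  shows "(x + h) powr \<mu> - x powr \<mu> \<le> \<mu> * (x + h) powr (\<mu> - 1) * h"
proof -
  have "\<exists>z. x < z \<and> z < x + h \<and> (x + h) powr \<mu> - x powr \<mu> = (x + h - x) * (\<mu> * z powr (\<mu> - 1))"
    by (rule MVT2) (use assms in \<open>auto intro!: has_real_derivative_powr\<close>)
  then obtain z where z: "x < z" "z < x + h" "(x + h) powr \<mu> - x powr \<mu> = h * (\<mu> * z powr (\<mu> - 1))"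
    by auto
  have "z powr (\<mu> - 1) \<le> (x + h) powr (\<mu> - 1)"
    by (rule powr_mono2) (use assms z in auto)
  with z assms show ?thesis
    by (simp add: mult_left_mono mult.commute mult.left_commute)
qed

lemma add_le_double_mult:
  fixes x y :: real
  assumes "x \<ge> 1" "y \<ge> 1"
  shows "x + y \<le> 2 * (x * y)"
  using assms mult_le_cancel_left1[of x y] mult_le_cancel_right1[of y x] by linarith

lemma moment_increment_le:
  fixes x y \<mu> :: real
  assumes x: "x \<ge> 1" and y: "y \<ge> 1" and \<mu>: "\<mu> \<ge> 1"
  shows "(x + y) powr \<mu> - x powr \<mu> + y powr \<mu> \<le> (\<mu> * 2 powr (\<mu> - 1) + 1) * x powr (\<mu> - 1) * y powr \<mu>"
proof -
  have "(x + y) powr (\<mu> - 1) \<le> (2 * (x * y)) powr (\<mu> - 1)"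
    by (rule powr_mono2) (use x y \<mu> add_le_double_mult[OF x y] in auto)
  also have "\<dots> = 2 powr (\<mu> - 1) * x powr (\<mu> - 1) * y powr (\<mu> - 1)"
    using x y by (simp add: powr_mult)
  finally have "\<mu> * (x + y) powr (\<mu> - 1) * y \<le> \<mu> * (2 powr (\<mu> - 1) * x powr (\<mu> - 1) * y powr (\<mu> - 1)) * y"
    using \<mu> y by (intro mult_right_mono mult_left_mono) auto
  also have "\<dots> = \<mu> * 2 powr (\<mu> - 1) * x powr (\<mu> - 1) * y powr \<mu>"
    using y powr_add[of y "\<mu> - 1" 1] by (simp add: mult_ac)
  finally have "(x + y) powr \<mu> - x powr \<mu> \<le> \<mu> * 2 powr (\<mu> - 1) * x powr (\<mu> - 1) * y powr \<mu>"
    using powr_add_minus_powr_le[of x y \<mu>] x y \<mu> by linarith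
  moreover have "y powr \<mu> \<le> x powr (\<mu> - 1) * y powr \<mu>"
    using x \<mu> ge_one_powr_ge_zero[of x "\<mu> - 1"] by (simp add: mult_le_cancel_right1)
  ultimately show ?thesis by (simp add: algebra_simps)
qed

lemma kernel_moment_increment_le:
  fixes x y \<mu> \<beta> B a :: real
  assumes x: "x \<ge> 1" and y: "y \<ge> 1" and \<mu>: "\<mu> \<ge> 1" and \<beta>: "0 \<le> \<beta>" "\<beta> \<le> 1"
    and a: "0 \<le> a" "a \<le> B * (x powr \<beta> * y powr \<beta>)"
  shows "a * ((x + y) powr \<mu> - x powr \<mu> + y powr \<mu>)
    \<le> B * (\<mu> * 2 powr (\<mu> - 1) + 1) * (x powr \<mu> * y powr (\<mu> + \<beta>))"
proof -
  define K where "K = \<mu> * 2 powr (\<mu> - 1) + 1"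
  have K: "K \<ge> 0" using \<mu> by (simp add: K_def)
  have "0 < x powr \<beta> * y powr \<beta>" using x y by simp
  then have B: "B \<ge> 0" using a zero_le_mult_iff[of B "x powr \<beta> * y powr \<beta>"] by linarith
  have "x powr \<mu> \<le> (x + y) powr \<mu>" by (rule powr_mono2) (use x y \<mu> in auto)
  then have "a * ((x + y) powr \<mu> - x powr \<mu> + y powr \<mu>) \<le> B * (x powr \<beta> * y powr \<beta>) * (K * x powr (\<mu> - 1) * y powr \<mu>)"
    using moment_increment_le[OF x y \<mu>] a B by (intro mult_mono) (auto simp: K_def)
  also have "\<dots> = B * K * (x powr (\<mu> - 1 + \<beta>) * y powr (\<mu> + \<beta>))"
    using x y by (simp add: powr_add mult_ac)
  also have "\<dots> \<le> B * K * (x powr \<mu> * y powr (\<mu> + \<beta>))"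
    using x \<beta> B K by (intro mult_left_mono mult_right_mono powr_mono) auto
  finally show ?thesis by (simp add: K_def)
qed

lemma signed_increment_le:
  fixes Z W W' \<sigma>\<^sub>0 \<sigma> \<sigma>' e :: real
  assumes "\<bar>\<sigma>\<^sub>0\<bar> \<le> 1" "\<bar>\<sigma>'\<bar> \<le> 1" "\<sigma> * e = \<bar>e\<bar>" "Z \<ge> 0" "W' \<ge> 0"
  shows "(Z * \<sigma>\<^sub>0 - W * \<sigma> - W' * \<sigma>') * e \<le> (Z - W + W') * \<bar>e\<bar>"
proof -
  have "\<sigma>\<^sub>0 * e \<le> \<bar>e\<bar>" "- (\<sigma>' * e) \<le> \<bar>e\<bar>"
  proof -
    have "\<bar>\<sigma>\<^sub>0 * e\<bar> \<le> \<bar>e\<bar>" "\<bar>\<sigma>' * e\<bar> \<le> \<bar>e\<bar>"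
      using assms(1,2) by (simp_all add: abs_mult mult_left_le_one_le)
    then show "\<sigma>\<^sub>0 * e \<le> \<bar>e\<bar>" "- (\<sigma>' * e) \<le> \<bar>e\<bar>"
      by (simp_all add: abs_le_iff)
  qed
  then have "Z * (\<sigma>\<^sub>0 * e) \<le> Z * \<bar>e\<bar>" "W' * (- (\<sigma>' * e)) \<le> W' * \<bar>e\<bar>"
    using assms(4,5) by (simp_all only: mult_left_mono)
  moreover have "(Z * \<sigma>\<^sub>0 - W * \<sigma> - W' * \<sigma>') * e = Z * (\<sigma>\<^sub>0 * e) - W * \<bar>e\<bar> + W' * (- (\<sigma>' * e))"
    using assms(3) by (simp add: algebra_simps)
  moreover have "(Z - W + W') * \<bar>e\<bar> = Z * \<bar>e\<bar> - W * \<bar>e\<bar> + W' * \<bar>e\<bar>"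
    by (simp add: algebra_simps)
  ultimately show ?thesis by linarith
qed

lemma coagulation_increment_le:
  fixes x y \<mu> \<beta> B a \<sigma>\<^sub>0 \<sigma>\<^sub>1 \<sigma>\<^sub>2 c\<^sub>1 c\<^sub>2 d\<^sub>1 d\<^sub>2 :: real
  assumes x: "x \<ge> 1" and y: "y \<ge> 1" and \<mu>: "\<mu> \<ge> 1" and \<beta>: "0 \<le> \<beta>" "\<beta> \<le> 1"
    and a: "0 \<le> a" "a \<le> B * (x powr \<beta> * y powr \<beta>)"
    and \<sigma>: "\<bar>\<sigma>\<^sub>0\<bar> \<le> 1" "\<bar>\<sigma>\<^sub>1\<bar> \<le> 1" "\<bar>\<sigma>\<^sub>2\<bar> \<le> 1"
      "\<sigma>\<^sub>1 * (c\<^sub>1 - d\<^sub>1) = \<bar>c\<^sub>1 - d\<^sub>1\<bar>" "\<sigma>\<^sub>2 * (c\<^sub>2 - d\<^sub>2) = \<bar>c\<^sub>2 - d\<^sub>2\<bar>"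
    and nonneg: "c\<^sub>1 \<ge> 0" "c\<^sub>2 \<ge> 0" "d\<^sub>1 \<ge> 0" "d\<^sub>2 \<ge> 0"
  shows "a * (c\<^sub>1 * c\<^sub>2 - d\<^sub>1 * d\<^sub>2) * ((x + y) powr \<mu> * \<sigma>\<^sub>0 - x powr \<mu> * \<sigma>\<^sub>1 - y powr \<mu> * \<sigma>\<^sub>2)
    \<le> B * (\<mu> * 2 powr (\<mu> - 1) + 1) / 2 *
       (x powr \<mu> * \<bar>c\<^sub>1 - d\<^sub>1\<bar> * (y powr (\<mu> + \<beta>) * (c\<^sub>2 + d\<^sub>2))
        + y powr \<mu> * \<bar>c\<^sub>2 - d\<^sub>2\<bar> * (x powr (\<mu> + \<beta>) * (c\<^sub>1 + d\<^sub>1)))"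
proof -
  define Z W\<^sub>1 W\<^sub>2 K where "Z = (x + y) powr \<mu>" and "W\<^sub>1 = x powr \<mu>" and "W\<^sub>2 = y powr \<mu>"
    and "K = B * (\<mu> * 2 powr (\<mu> - 1) + 1)"
  define Q where "Q = Z * \<sigma>\<^sub>0 - W\<^sub>1 * \<sigma>\<^sub>1 - W\<^sub>2 * \<sigma>\<^sub>2"
  have Q\<^sub>1: "Q * (c\<^sub>1 - d\<^sub>1) \<le> (Z - W\<^sub>1 + W\<^sub>2) * \<bar>c\<^sub>1 - d\<^sub>1\<bar>"
    unfolding Q_def by (rule signed_increment_le) (use \<sigma> in \<open>auto simp: Z_def W\<^sub>2_def\<close>)
  have Q\<^sub>2: "Q * (c\<^sub>2 - d\<^sub>2) \<le> (Z - W\<^sub>2 + W\<^sub>1) * \<bar>c\<^sub>2 - d\<^sub>2\<bar>"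
    using signed_increment_le[of \<sigma>\<^sub>0 \<sigma>\<^sub>1 \<sigma>\<^sub>2 "c\<^sub>2 - d\<^sub>2" Z W\<^sub>1 W\<^sub>2] \<sigma>
    by (simp add: Q_def Z_def W\<^sub>1_def algebra_simps)
  have K\<^sub>1: "a * (Z - W\<^sub>1 + W\<^sub>2) \<le> K * (W\<^sub>1 * y powr (\<mu> + \<beta>))"
    using kernel_moment_increment_le[OF x y \<mu> \<beta> a] by (simp add: Z_def W\<^sub>1_def W\<^sub>2_def K_def)
  have K\<^sub>2: "a * (Z - W\<^sub>2 + W\<^sub>1) \<le> K * (W\<^sub>2 * x powr (\<mu> + \<beta>))"
    using kernel_moment_increment_le[OF y x \<mu> \<beta>, of a B] a
    by (simp add: Z_def W\<^sub>1_def W\<^sub>2_def K_def add.commute mult.commute)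
  have "a * (c\<^sub>1 * c\<^sub>2 - d\<^sub>1 * d\<^sub>2) * Q
      = (a * (Q * (c\<^sub>1 - d\<^sub>1)) * (c\<^sub>2 + d\<^sub>2) + a * (Q * (c\<^sub>2 - d\<^sub>2)) * (c\<^sub>1 + d\<^sub>1)) / 2"
    by (simp add: algebra_simps)
  also have "\<dots> \<le> (a * (Z - W\<^sub>1 + W\<^sub>2) * \<bar>c\<^sub>1 - d\<^sub>1\<bar> * (c\<^sub>2 + d\<^sub>2)
                  + a * (Z - W\<^sub>2 + W\<^sub>1) * \<bar>c\<^sub>2 - d\<^sub>2\<bar> * (c\<^sub>1 + d\<^sub>1)) / 2"
    using Q\<^sub>1 Q\<^sub>2 a nonneg by (intro divide_right_mono add_mono mult_right_mono)
      (auto simp: mult.assoc intro: mult_left_mono)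
  also have "\<dots> \<le> (K * (W\<^sub>1 * y powr (\<mu> + \<beta>)) * \<bar>c\<^sub>1 - d\<^sub>1\<bar> * (c\<^sub>2 + d\<^sub>2)
                  + K * (W\<^sub>2 * x powr (\<mu> + \<beta>)) * \<bar>c\<^sub>2 - d\<^sub>2\<bar> * (c\<^sub>1 + d\<^sub>1)) / 2"
    using K\<^sub>1 K\<^sub>2 nonneg by (intro divide_right_mono add_mono mult_right_mono) auto
  also have "\<dots> = K / 2 * (W\<^sub>1 * \<bar>c\<^sub>1 - d\<^sub>1\<bar> * (y powr (\<mu> + \<beta>) * (c\<^sub>2 + d\<^sub>2))
                        + W\<^sub>2 * \<bar>c\<^sub>2 - d\<^sub>2\<bar> * (x powr (\<mu> + \<beta>) * (c\<^sub>1 + d\<^sub>1)))"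
    by (simp add: algebra_simps)
  finally show ?thesis unfolding Q_def Z_def W\<^sub>1_def W\<^sub>2_def K_def .
qed

lemma moment_constant_le:
  fixes \<mu> :: real
  assumes "\<mu> \<ge> 1"
  shows "\<mu> * 2 powr (\<mu> - 1) + 1 \<le> 2 * (2 powr (max (\<mu> - 2) 0) * max \<mu> (\<mu> * (\<mu> - 1)) + 2)"
proof (cases "\<mu> \<ge> 2")
  case True
  then have "\<mu> * 2 powr (\<mu> - 1) = 2 * (2 powr (max (\<mu> - 2) 0) * \<mu>)"
    by (simp add: powr_diff powr_add[symmetric])
  also have "\<dots> \<le> 2 * (2 powr (max (\<mu> - 2) 0) * max \<mu> (\<mu> * (\<mu> - 1)))"
    by simp
  finally show ?thesis by simp
next
  case False
  have "2 powr (\<mu> - 1) \<le> 2 powr 1" by (rule powr_mono) (use False in auto)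
  then have "\<mu> * 2 powr (\<mu> - 1) \<le> \<mu> * 2" using assms by (intro mult_left_mono) auto
  moreover have "\<mu> \<le> 2 powr (max (\<mu> - 2) 0) * max \<mu> (\<mu> * (\<mu> - 1))"
    using False by simp
  ultimately show ?thesis by argo
qed

lemma powr_cross_sum_le:
  fixes x y \<alpha> \<beta> A :: real
  assumes "x \<ge> 1" "y \<ge> 1" "\<alpha> \<le> \<beta>" "A \<ge> 0"
  shows "A * (x powr \<alpha> * y powr \<beta> + x powr \<beta> * y powr \<alpha>) \<le> 2 * A * (x powr \<beta> * y powr \<beta>)"
proof -
  have "x powr \<alpha> * y powr \<beta> \<le> x powr \<beta> * y powr \<beta>" "x powr \<beta> * y powr \<alpha> \<le> x powr \<beta> * y powr \<beta>"
    using assms by (auto intro: mult_right_mono mult_left_mono powr_mono)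
  then have "x powr \<alpha> * y powr \<beta> + x powr \<beta> * y powr \<alpha> \<le> 2 * (x powr \<beta> * y powr \<beta>)"
    by linarith
  from mult_left_mono[OF this assms(4)] show ?thesis
    by (simp add: mult.assoc)
qed

lemma has_sum_diff:
  fixes f g :: "'a \<Rightarrow> 'b::topological_ab_group_add"
  assumes "(f has_sum a) A" "(g has_sum b) A"
  shows "((\<lambda>x. f x - g x) has_sum (a - b)) A"
proof -
  have "((\<lambda>x. - g x) has_sum - b) A"
    by (rule has_sum_uminus[THEN iffD2]) (simp add: assms(2))
  from has_sum_add[OF assms(1) this] show ?thesis by simp
qed

lemma norm_summable_Suc_has_sum:
  fixes f :: "nat \<Rightarrow> real"
  assumes "summable (\<lambda>k. \<bar>f (Suc k)\<bar>)"
  shows "(f has_sum (\<Sum>k. f (Suc k))) {1..}"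
proof -
  have "((\<lambda>k. f (Suc k)) has_sum (\<Sum>k. f (Suc k))) UNIV"
    using assms by (intro norm_summable_imp_has_sum) (auto intro: summable_sums summable_rabs_cancel)
  moreover have "Suc ` UNIV = {1..}"
    by (auto simp: image_iff dest: Suc_le_D)
  ultimately show ?thesis
    using has_sum_reindex[of Suc UNIV f] by (simp add: o_def)
qed

lemma has_sum_product_nonneg:
  fixes f :: "'a \<Rightarrow> real" and g :: "'b \<Rightarrow> real"
  assumes f: "(f has_sum x) A" and g: "(g has_sum y) B"
    and "\<And>i. i \<in> A \<Longrightarrow> f i \<ge> 0" "\<And>j. j \<in> B \<Longrightarrow> g j \<ge> 0"
  shows "((\<lambda>(i, j). f i * g j) has_sum x * y) (A \<times> B)"
proof -
  have inner: "((\<lambda>j. (\<lambda>(i, j). f i * g j) (i, j)) has_sum f i * y) B" for i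
    using has_sum_cmult_right[OF g] by simp
  have outer: "((\<lambda>i. f i * y) has_sum x * y) A"
    by (rule has_sum_cmult_left[OF f])
  have "(\<lambda>(i, j). f i * g j) summable_on A \<times> B"
    by (rule summable_on_SigmaI[OF inner has_sum_imp_summable[OF outer]]) (use assms in auto)
  then show ?thesis by (rule has_sum_SigmaI[OF inner outer])
qed

lemma has_sum_antidiagonal:
  fixes f :: "nat \<Rightarrow> nat \<Rightarrow> 'a::{topological_comm_monoid_add, t3_space}"
  assumes "((\<lambda>(i, j). f i j) has_sum S) ({1..} \<times> {1..})"
  shows "((\<lambda>k. \<Sum>l=1..k-1. f (k - l) l) has_sum S) {1..}"
proof -
  have "((\<lambda>(k, l). f (k - l) l) has_sum S) (SIGMA k:{1..}. {1..k-1})"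
    by (rule has_sum_reindex_bij_witness[where i="\<lambda>(i, j). (i + j, j)" and j="\<lambda>(k, l). (k - l, l)",
          THEN iffD2, OF _ _ _ _ _ _ assms]) auto
  then show ?thesis
    by (rule has_sum_SigmaD) auto
qed

section \<open>Weighted norms\<close>

lemma wnorm_has_sum:
  assumes "wsummable \<mu> x"
  shows "((\<lambda>k. real k powr \<mu> * \<bar>x k\<bar>) has_sum wnorm \<mu> x) {1..}"
  using norm_summable_Suc_has_sum[of "\<lambda>k. real k powr \<mu> * \<bar>x k\<bar>"] assms
  by (simp add: wsummable_def wnorm_def)

lemma wnorm_eq_suminf:
  assumes "\<And>k. k \<ge> 1 \<Longrightarrow> 0 \<le> x k"
  shows "wnorm \<nu> x = (\<Sum>k. real (Suc k) powr \<nu> * x (Suc k))"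
  using assms by (simp add: wnorm_def abs_of_nonneg)

lemma wnorm_nonneg: "wsummable \<mu> x \<Longrightarrow> 0 \<le> wnorm \<mu> x"
  unfolding wsummable_def wnorm_def by (rule suminf_nonneg) auto

lemma abs_le_wnorm:
  assumes "wsummable \<mu> x" "\<mu> \<ge> 0" "k \<ge> 1"
  shows "\<bar>x k\<bar> \<le> wnorm \<mu> x"
proof -
  obtain m where k: "k = Suc m" using assms(3) by (cases k) auto
  have "\<bar>x k\<bar> \<le> real k powr \<mu> * \<bar>x k\<bar>"
    using assms(2,3) ge_one_powr_ge_zero[of "real k" \<mu>] by (simp add: mult_le_cancel_right1)
  also have "\<dots> \<le> wnorm \<mu> x"
    using sum_le_suminf[of "\<lambda>k. real (Suc k) powr \<mu> * \<bar>x (Suc k)\<bar>" "{m}"] assms(1)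
    by (simp add: wsummable_def wnorm_def k)
  finally show ?thesis .
qed

lemma wsummable_cong:
  assumes "\<And>k. k \<ge> 1 \<Longrightarrow> x k = y k"
  shows "wsummable \<mu> x \<longleftrightarrow> wsummable \<mu> y" and "wnorm \<mu> x = wnorm \<mu> y"
  using assms by (simp_all add: wsummable_def wnorm_def)

lemma wsummable_add:
  assumes "wsummable \<mu> x" "wsummable \<mu> y"
  shows "wsummable \<mu> (\<lambda>k. x k + y k)"
  unfolding wsummable_def
proof (rule summable_comparison_test'[OF summable_add[OF assms[unfolded wsummable_def]]])
  fix k
  show "norm (real (Suc k) powr \<mu> * \<bar>x (Suc k) + y (Suc k)\<bar>)
    \<le> real (Suc k) powr \<mu> * \<bar>x (Suc k)\<bar> + real (Suc k) powr \<mu> * \<bar>y (Suc k)\<bar>"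
    by (simp add: distrib_left[symmetric] mult_left_mono abs_triangle_ineq)
qed

lemma wsummable_diff:
  assumes "wsummable \<mu> x" "wsummable \<mu> y"
  shows "wsummable \<mu> (\<lambda>k. x k - y k)"
  unfolding wsummable_def
proof (rule summable_comparison_test'[OF summable_add[OF assms[unfolded wsummable_def]]])
  fix k
  show "norm (real (Suc k) powr \<mu> * \<bar>x (Suc k) - y (Suc k)\<bar>)
    \<le> real (Suc k) powr \<mu> * \<bar>x (Suc k)\<bar> + real (Suc k) powr \<mu> * \<bar>y (Suc k)\<bar>"
    by (simp add: distrib_left[symmetric] mult_left_mono abs_triangle_ineq4)
qed

lemma wnorm_diff_le:
  assumes "wsummable \<mu> x" "wsummable \<mu> y"
  shows "wnorm \<mu> (\<lambda>k. x k - y k) \<le> wnorm \<mu> x + wnorm \<mu> y"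
proof -
  let ?w = "\<lambda>k. real (Suc k) powr \<mu>"
  have "?w k * \<bar>x (Suc k) - y (Suc k)\<bar> \<le> ?w k * \<bar>x (Suc k)\<bar> + ?w k * \<bar>y (Suc k)\<bar>" for k
    by (simp add: distrib_left[symmetric] mult_left_mono abs_triangle_ineq4)
  then have "wnorm \<mu> (\<lambda>k. x k - y k) \<le> (\<Sum>k. ?w k * \<bar>x (Suc k)\<bar> + ?w k * \<bar>y (Suc k)\<bar>)"
    unfolding wnorm_def using wsummable_diff[OF assms] assms
    by (intro suminf_le) (auto simp: wsummable_def intro: summable_add)
  also have "\<dots> = wnorm \<mu> x + wnorm \<mu> y"
    unfolding wnorm_def using assms by (intro suminf_add[symmetric]) (simp_all add: wsummable_def)
  finally show ?thesis .
qed

lemma wsummable_divide: "wsummable \<mu> x \<Longrightarrow> wsummable \<mu> (\<lambda>k. x k / u)"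
  unfolding wsummable_def using summable_divide[of _ "\<bar>u\<bar>"] by (simp add: abs_divide)

lemma wsummable_mono_exponent:
  assumes "wsummable \<nu> x" "\<mu> \<le> \<nu>"
  shows "wsummable \<mu> x"
  unfolding wsummable_def
  by (rule summable_comparison_test'[OF assms(1)[unfolded wsummable_def]])
    (use assms(2) in \<open>auto intro!: mult_right_mono powr_mono\<close>)

section \<open>The right Dini derivative of a weighted norm\<close>

definition abs_right_deriv :: "real \<Rightarrow> real \<Rightarrow> real" where
  "abs_right_deriv u v = (if u = 0 then \<bar>v\<bar> else sgn u * v)"

lemma abs_right_deriv_eq_sgn: "abs_right_deriv u v = (if u = 0 then sgn v else sgn u) * v"
  by (simp add: abs_right_deriv_def abs_sgn mult.commute)

lemma tendsto_abs_right_deriv: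
  fixes u v t :: real
  shows "((\<lambda>h. (\<bar>u + (h - t) * v\<bar> - \<bar>u\<bar>) / (h - t)) \<longlongrightarrow> abs_right_deriv u v) (at_right t)"
proof (cases "u = 0")
  case True
  have "\<forall>\<^sub>F h in at_right t. (\<bar>u + (h - t) * v\<bar> - \<bar>u\<bar>) / (h - t) = \<bar>v\<bar>"
    using eventually_at_right_less[of t] by eventually_elim (use True in \<open>simp add: abs_mult\<close>)
  then show ?thesis using True by (simp add: abs_right_deriv_def tendsto_eventually)
next
  case False
  have "((\<lambda>h. \<bar>(h - t) * v\<bar>) \<longlongrightarrow> \<bar>(t - t) * v\<bar>) (at_right t)"
    by (intro tendsto_intros)
  then have "\<forall>\<^sub>F h in at_right t. \<bar>(h - t) * v\<bar> < \<bar>u\<bar>"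
    using False by (intro order_tendstoD(2)) auto
  then have "\<forall>\<^sub>F h in at_right t. (\<bar>u + (h - t) * v\<bar> - \<bar>u\<bar>) / (h - t) = sgn u * v"
    using eventually_at_right_less[of t]
    by eventually_elim (cases "u > 0"; auto simp: abs_if sgn_if split: if_splits)
  then show ?thesis using False by (simp add: abs_right_deriv_def tendsto_eventually)
qed

lemma abs_difference_quotient_le:
  fixes a b v d :: real
  assumes "d > 0"
  shows "\<bar>(\<bar>b + d * v\<bar> - \<bar>b\<bar>) / d\<bar> \<le> \<bar>v\<bar>"
    and "\<bar>(\<bar>a\<bar> - \<bar>b\<bar>) / d - (\<bar>b + d * v\<bar> - \<bar>b\<bar>) / d\<bar> \<le> \<bar>(a - b) / d - v\<bar>"
proof -
  have "\<bar>\<bar>b + d * v\<bar> - \<bar>b\<bar>\<bar> \<le> d * \<bar>v\<bar>"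
    using abs_triangle_ineq3[of "b + d * v" b] assms by (simp add: abs_mult)
  then show "\<bar>(\<bar>b + d * v\<bar> - \<bar>b\<bar>) / d\<bar> \<le> \<bar>v\<bar>"
    using assms by (simp add: abs_divide divide_le_eq mult.commute)
  have "\<bar>\<bar>a\<bar> - \<bar>b + d * v\<bar>\<bar> \<le> \<bar>a - b - d * v\<bar>"
    using abs_triangle_ineq3[of a "b + d * v"] by (simp add: algebra_simps)
  also have "a - b - d * v = d * ((a - b) / d - v)"
    using assms by (simp add: field_simps)
  also have "\<bar>\<dots>\<bar> = d * \<bar>(a - b) / d - v\<bar>"
    using assms by (simp add: abs_mult)
  finally show "\<bar>(\<bar>a\<bar> - \<bar>b\<bar>) / d - (\<bar>b + d * v\<bar> - \<bar>b\<bar>) / d\<bar> \<le> \<bar>(a - b) / d - v\<bar>"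
    using assms by (simp add: abs_divide divide_le_eq mult.commute diff_divide_distrib[symmetric])
qed

lemma wnorm_quotient_linearization_le:
  fixes x x' y :: "nat \<Rightarrow> real" and d :: real
  assumes d: "d > 0" and x: "wsummable \<mu> x" and x': "wsummable \<mu> x'" and y: "wsummable \<mu> y"
  shows "\<bar>(wnorm \<mu> x' - wnorm \<mu> x) / d
      - (\<Sum>k. real (Suc k) powr \<mu> * ((\<bar>x (Suc k) + d * y (Suc k)\<bar> - \<bar>x (Suc k)\<bar>) / d))\<bar>
    \<le> wnorm \<mu> (\<lambda>k. (x' k - x k) / d - y k)"
proof -
  define w where "w k = real (Suc k) powr \<mu>" for k
  define A B where "A k = (\<bar>x' (Suc k)\<bar> - \<bar>x (Suc k)\<bar>) / d"
    and "B k = (\<bar>x (Suc k) + d * y (Suc k)\<bar> - \<bar>x (Suc k)\<bar>) / d" for k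
  have w: "w k \<ge> 0" for k by (simp add: w_def)
  have "summable (\<lambda>k. w k * B k)"
  proof (rule summable_comparison_test'[OF y[unfolded wsummable_def]])
    show "norm (w k * B k) \<le> real (Suc k) powr \<mu> * \<bar>y (Suc k)\<bar>" for k
      using mult_left_mono[OF abs_difference_quotient_le(1)[OF d] w]
      by (simp add: B_def w_def abs_mult)
  qed
  moreover have "(\<lambda>k. w k * A k) sums ((wnorm \<mu> x' - wnorm \<mu> x) / d)"
    using sums_divide[OF sums_diff[OF summable_sums summable_sums]] x x'
    by (simp add: A_def wnorm_def wsummable_def w_def right_diff_distrib)
  ultimately have "(wnorm \<mu> x' - wnorm \<mu> x) / d - (\<Sum>k. w k * B k) = (\<Sum>k. w k * (A k - B k))"
    by (intro sums_unique) (auto simp: right_diff_distrib intro: sums_diff)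
  moreover have "norm (w k * (A k - B k)) \<le> w k * \<bar>(x' (Suc k) - x (Suc k)) / d - y (Suc k)\<bar>" for k
    using mult_left_mono[OF abs_difference_quotient_le(2)[OF d] w]
    by (simp add: A_def B_def abs_mult abs_of_nonneg[OF w])
  moreover have "summable (\<lambda>k. w k * \<bar>(x' (Suc k) - x (Suc k)) / d - y (Suc k)\<bar>)"
    using wsummable_diff[OF wsummable_divide[OF wsummable_diff[OF x' x]] y]
    by (simp add: wsummable_def w_def)
  ultimately show ?thesis
    using norm_suminf_le[of "\<lambda>k. w k * (A k - B k)"] by (simp add: B_def w_def wnorm_def)
qed

lemma wnorm_right_derivative:
  fixes x :: "real \<Rightarrow> nat \<Rightarrow> real" and y :: "nat \<Rightarrow> real"
  assumes x: "\<And>h. h \<ge> t \<Longrightarrow> wsummable \<mu> (x h)" and y: "wsummable \<mu> y"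
    and lim: "((\<lambda>h. wnorm \<mu> (\<lambda>k. (x h k - x t k) / (h - t) - y k)) \<longlongrightarrow> 0) (at_right t)"
  shows "((\<lambda>h. (wnorm \<mu> (x h) - wnorm \<mu> (x t)) / (h - t)) \<longlongrightarrow>
           (\<Sum>k. real (Suc k) powr \<mu> * abs_right_deriv (x t (Suc k)) (y (Suc k)))) (at_right t)"
proof -
  \<comment> \<open>The quotients of the linearisation \<open>h \<mapsto> \<bar>x t k + (h - t) y k\<bar>\<close> converge termwise under the
    dominating sequence \<open>k\<^sup>\<mu> \<bar>y k\<bar>\<close>, and differ from the true quotients by at most the quotient error.\<close>
  define g where "g h k = real (Suc k) powr \<mu> * ((\<bar>x t (Suc k) + (h - t) * y (Suc k)\<bar> - \<bar>x t (Suc k)\<bar>) / (h - t))"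
    for h k
  have "((\<lambda>h. \<Sum>k. g h k) \<longlongrightarrow> (\<Sum>k. real (Suc k) powr \<mu> * abs_right_deriv (x t (Suc k)) (y (Suc k))))
      (at_right t)"
  proof (rule tannerys_theorem[THEN conjunct2, THEN conjunct2])
    show "((\<lambda>h. g h k) \<longlongrightarrow> real (Suc k) powr \<mu> * abs_right_deriv (x t (Suc k)) (y (Suc k))) (at_right t)" for k
      unfolding g_def by (intro tendsto_mult_left tendsto_abs_right_deriv)
    have "norm (g h k) \<le> real (Suc k) powr \<mu> * \<bar>y (Suc k)\<bar>" if "h > t" for h k
      using mult_left_mono[OF abs_difference_quotient_le(1), of "h - t"] that by (simp add: g_def abs_mult)
    then show "\<forall>\<^sub>F (k, h) in sequentially \<times>\<^sub>F at_right t. norm (g h k) \<le> real (Suc k) powr \<mu> * \<bar>y (Suc k)\<bar>"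
      unfolding eventually_prod_filter
      by (intro exI[of _ "\<lambda>_. True"] exI[of _ "\<lambda>h. h > t"]) (auto simp: eventually_at_right_less)
  qed (use y in \<open>auto simp: wsummable_def\<close>)
  moreover have "((\<lambda>h. (wnorm \<mu> (x h) - wnorm \<mu> (x t)) / (h - t) - (\<Sum>k. g h k)) \<longlongrightarrow> 0) (at_right t)"
  proof (rule Lim_null_comparison[OF _ lim])
    show "\<forall>\<^sub>F h in at_right t. norm ((wnorm \<mu> (x h) - wnorm \<mu> (x t)) / (h - t) - (\<Sum>k. g h k))
            \<le> wnorm \<mu> (\<lambda>k. (x h k - x t k) / (h - t) - y k)"
      using eventually_at_right_less[of t]
      by eventually_elim (use wnorm_quotient_linearization_le x y in \<open>simp add: g_def\<close>)
  qed
  ultimately show ?thesis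
    using tendsto_add by fastforce
qed

section \<open>The coagulation operator\<close>

lemma coagulation_weak_form:
  fixes F :: "nat \<Rightarrow> nat \<Rightarrow> real" and \<phi> :: "nat \<Rightarrow> real"
  assumes sym: "\<And>i j. i \<ge> 1 \<Longrightarrow> j \<ge> 1 \<Longrightarrow> F i j = F j i"
    and gain: "(\<lambda>(i, j). F i j * \<phi> (i + j)) summable_on {1..} \<times> {1..}"
    and loss: "(\<lambda>(i, j). F i j * \<phi> i) summable_on {1..} \<times> {1..}"
  shows "(\<lambda>(i, j). F i j * (\<phi> (i + j) - \<phi> i - \<phi> j)) summable_on {1..} \<times> {1..}"
    and "((\<lambda>k. \<phi> k * ((\<Sum>l=1..k-1. F (k - l) l) / 2 - (\<Sum>\<^sub>\<infinity>l\<in>{1..}. F k l))) has_sum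
           (\<Sum>\<^sub>\<infinity>(i, j)\<in>{1..} \<times> {1..}. F i j * (\<phi> (i + j) - \<phi> i - \<phi> j)) / 2) {1..}"
proof -
  define P where "P = {1::nat..} \<times> {1::nat..}"
  define G where "G = (\<Sum>\<^sub>\<infinity>(i, j)\<in>P. F i j * \<phi> (i + j))"
  define L where "L = (\<Sum>\<^sub>\<infinity>(i, j)\<in>P. F i j * \<phi> i)"
  have hG2: "((\<lambda>(i, j). F i j * \<phi> (i + j)) has_sum G) P"
    using gain by (simp add: G_def P_def)
  have hL2: "((\<lambda>(i, j). F i j * \<phi> i) has_sum L) P"
    using loss by (simp add: L_def P_def)
  have "((\<lambda>k. \<Sum>l=1..k-1. F (k - l) l * \<phi> (k - l + l)) has_sum G) {1..}"
    using has_sum_antidiagonal[of "\<lambda>i j. F i j * \<phi> (i + j)"] hG2 by (simp add: P_def)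
  then have hG: "((\<lambda>k. \<phi> k * (\<Sum>l=1..k-1. F (k - l) l)) has_sum G) {1..}"
    by (rule has_sum_cong[THEN iffD1, rotated]) (auto simp: sum_distrib_left mult.commute intro!: sum.cong)
  have "((\<lambda>(k, l). F k l * \<phi> k) has_sum L) (SIGMA k:{1..}. {1..})"
    using hL2 by (simp add: P_def)
  then have hL: "((\<lambda>k. \<phi> k * (\<Sum>\<^sub>\<infinity>l\<in>{1..}. F k l)) has_sum L) {1..}"
  proof (rule has_sum_SigmaD)
    fix k :: nat assume "k \<in> {1..}"
    then have "(\<lambda>l. F k l * \<phi> k) summable_on {1..}"
      using summable_on_SigmaD1[of "\<lambda>k l. F k l * \<phi> k"] loss by (auto simp: case_prod_unfold)
    then show "((\<lambda>l. (\<lambda>(k, l). F k l * \<phi> k) (k, l)) has_sum \<phi> k * (\<Sum>\<^sub>\<infinity>l\<in>{1..}. F k l)) {1..}"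
      using has_sum_infsum by (fastforce simp: infsum_cmult_right' mult.commute)
  qed
  have "((\<lambda>(i, j). F j i * \<phi> j) has_sum L) P"
    using has_sum_swap[where f="\<lambda>(i, j). F i j * \<phi> i" and S=L and A="{1..}" and B="{1..}"] hL2
    by (simp add: P_def)
  then have hL': "((\<lambda>(i, j). F i j * \<phi> j) has_sum L) P"
    by (rule has_sum_cong[THEN iffD1, rotated]) (auto simp: P_def sym)
  have hI: "((\<lambda>(i, j). F i j * (\<phi> (i + j) - \<phi> i - \<phi> j)) has_sum G - L - L) P"
    using has_sum_diff[OF has_sum_diff[OF hG2 hL2] hL'] by (simp add: case_prod_unfold algebra_simps)
  then show "(\<lambda>(i, j). F i j * (\<phi> (i + j) - \<phi> i - \<phi> j)) summable_on {1..} \<times> {1..}"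
    unfolding P_def by (rule has_sum_imp_summable)
  from hI have "(\<Sum>\<^sub>\<infinity>(i, j)\<in>P. F i j * (\<phi> (i + j) - \<phi> i - \<phi> j)) / 2 = G / 2 - L"
    by (simp add: infsumI)
  moreover have "((\<lambda>k. \<phi> k * (\<Sum>l=1..k-1. F (k - l) l) / 2) has_sum G / 2) {1..}"
    using has_sum_cmult_left[OF hG, of "1/2"] by simp
  note has_sum_diff[OF this hL]
  ultimately show "((\<lambda>k. \<phi> k * ((\<Sum>l=1..k-1. F (k - l) l) / 2 - (\<Sum>\<^sub>\<infinity>l\<in>{1..}. F k l))) has_sum
      (\<Sum>\<^sub>\<infinity>(i, j)\<in>{1..} \<times> {1..}. F i j * (\<phi> (i + j) - \<phi> i - \<phi> j)) / 2) {1..}"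
    by (simp add: P_def right_diff_distrib diff_divide_distrib)
qed

lemma coagulation_moment_summable:
  fixes a :: "nat \<Rightarrow> nat \<Rightarrow> real" and C :: "nat \<Rightarrow> real" and B \<beta> \<mu> :: real
  assumes a: "\<And>i j. i \<ge> 1 \<Longrightarrow> j \<ge> 1 \<Longrightarrow> 0 \<le> a i j \<and> a i j \<le> B * (real i powr \<beta> * real j powr \<beta>)"
    and C: "\<And>k. k \<ge> 1 \<Longrightarrow> C k \<ge> 0" and \<mu>: "\<mu> \<ge> 0" and moment: "wsummable (\<mu> + \<beta>) C"
  shows "(\<lambda>(i, j). a i j * (C i * C j) * real (i + j) powr \<mu>) summable_on {1..} \<times> {1..}"
proof -
  define V where "V k = real k powr (\<mu> + \<beta>) * C k" for k
  have V: "(V has_sum wnorm (\<mu> + \<beta>) C) {1..}"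
    using wnorm_has_sum[OF moment] by (rule has_sum_cong[THEN iffD1, rotated]) (simp add: V_def C)
  have "((\<lambda>(i, j). V i * V j) has_sum wnorm (\<mu> + \<beta>) C * wnorm (\<mu> + \<beta>) C) ({1..} \<times> {1..})"
    by (rule has_sum_product_nonneg[OF V V]) (simp_all add: V_def C)
  then have "(\<lambda>(i, j). 2 powr \<mu> * B * (V i * V j)) summable_on {1..} \<times> {1..}"
    using summable_on_cmult_right[of "\<lambda>(i, j). V i * V j" _ "2 powr \<mu> * B"]
    by (auto simp: case_prod_unfold dest: has_sum_imp_summable)
  then show ?thesis
  proof (rule summable_on_comparison_test)
    fix p assume "p \<in> {1::nat..} \<times> {1::nat..}"
    then obtain i j where p: "p = (i, j)" and ij: "i \<ge> 1" "j \<ge> 1" by auto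
    have Cij: "C i * C j \<ge> 0" using C ij by simp
    have "real (i + j) powr \<mu> \<le> (2 * (real i * real j)) powr \<mu>"
      by (rule powr_mono2) (use \<mu> ij add_le_double_mult[of "real i" "real j"] in auto)
    then have "a i j * (C i * C j) * real (i + j) powr \<mu>
        \<le> B * (real i powr \<beta> * real j powr \<beta>) * (C i * C j) * (2 * (real i * real j)) powr \<mu>"
      using a[OF ij] Cij C[OF ij(1)] C[OF ij(2)] by (intro mult_mono) (auto intro: order_trans)
    also have "\<dots> = 2 powr \<mu> * B * (V i * V j)"
      by (simp add: V_def powr_mult powr_add)
    finally show "(\<lambda>(i, j). a i j * (C i * C j) * real (i + j) powr \<mu>) p \<le> (\<lambda>(i, j). 2 powr \<mu> * B * (V i * V j)) p"
      by (simp add: p)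
    show "0 \<le> (\<lambda>(i, j). a i j * (C i * C j) * real (i + j) powr \<mu>) p"
      using a[OF ij] Cij by (simp add: p)
  qed
qed

lemma coagulation_test_summable:
  fixes a :: "nat \<Rightarrow> nat \<Rightarrow> real" and C D :: "nat \<Rightarrow> real" and \<psi> :: "nat \<Rightarrow> nat \<Rightarrow> real"
  assumes a: "\<And>i j. i \<ge> 1 \<Longrightarrow> j \<ge> 1 \<Longrightarrow> 0 \<le> a i j \<and> a i j \<le> B * (real i powr \<beta> * real j powr \<beta>)"
    and nonneg: "\<And>k. k \<ge> 1 \<Longrightarrow> 0 \<le> C k \<and> 0 \<le> D k" and \<mu>: "\<mu> \<ge> 0"
    and moments: "wsummable (\<mu> + \<beta>) C" "wsummable (\<mu> + \<beta>) D"
    and \<psi>: "\<And>i j. i \<ge> 1 \<Longrightarrow> j \<ge> 1 \<Longrightarrow> \<bar>\<psi> i j\<bar> \<le> real (i + j) powr \<mu>"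
  shows "(\<lambda>(i, j). a i j * (C i * C j - D i * D j) * \<psi> i j) summable_on {1..} \<times> {1..}"
proof -
  define majorant where "majorant = (\<lambda>(i, j). a i j * (C i * C j) * real (i + j) powr \<mu> + a i j * (D i * D j) * real (i + j) powr \<mu>)"
  have "majorant summable_on {1..} \<times> {1..}"
    unfolding majorant_def case_prod_beta
    by (intro summable_on_add[OF coagulation_moment_summable coagulation_moment_summable, unfolded case_prod_beta])
      (use a nonneg \<mu> moments in auto)
  then show ?thesis
  proof (rule summable_on_iff_abs_summable_on_real[THEN iffD2, OF Infinite_Sum.abs_summable_on_comparison_test'])
    fix p assume "p \<in> {1::nat..} \<times> {1::nat..}"
    then obtain i j where p: "p = (i, j)" and ij: "i \<ge> 1" "j \<ge> 1" by auto
    have "0 \<le> a i j" "0 \<le> C i * C j" "0 \<le> D i * D j"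
      using a[OF ij] nonneg[OF ij(1)] nonneg[OF ij(2)] by auto
    then have "\<bar>a i j * (C i * C j - D i * D j)\<bar> \<le> a i j * (C i * C j + D i * D j)"
      by (auto simp: abs_mult abs_le_iff intro!: mult_left_mono)
    have "norm ((\<lambda>(i, j). a i j * (C i * C j - D i * D j) * \<psi> i j) p)
        = \<bar>a i j * (C i * C j - D i * D j)\<bar> * \<bar>\<psi> i j\<bar>"
      by (simp add: p abs_mult)
    also have "\<dots> \<le> a i j * (C i * C j + D i * D j) * real (i + j) powr \<mu>"
      by (rule mult_mono[OF \<open>\<bar>a i j * _\<bar> \<le> _\<close> \<psi>[OF ij]]) (use \<open>0 \<le> a i j\<close> \<open>0 \<le> C i * C j\<close> \<open>0 \<le> D i * D j\<close> in auto)
    also have "\<dots> = majorant p"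
      by (simp add: p majorant_def algebra_simps)
    finally show "norm ((\<lambda>(i, j). a i j * (C i * C j - D i * D j) * \<psi> i j) p) \<le> majorant p" .
  qed
qed

lemma kernel_series_summable:
  fixes a e :: "nat \<Rightarrow> real"
  assumes a: "\<And>l. l \<ge> 1 \<Longrightarrow> 0 \<le> a l \<and> a l \<le> B * real l powr \<beta>"
    and e: "\<And>l. l \<ge> 1 \<Longrightarrow> 0 \<le> e l" and \<mu>: "\<mu> \<ge> 0" and moment: "wsummable (\<mu> + \<beta>) e"
  shows "summable (\<lambda>l. \<bar>a (Suc l) * e (Suc l)\<bar>)"
proof (rule summable_comparison_test'[OF summable_mult[OF moment[unfolded wsummable_def]]])
  fix l
  have "0 \<le> B" using a[of 1] by simp
  have "\<bar>a (Suc l) * e (Suc l)\<bar> \<le> B * real (Suc l) powr \<beta> * e (Suc l)"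
    using a[of "Suc l"] e[of "Suc l"] by (simp add: abs_mult mult_right_mono)
  also have "\<dots> \<le> B * (real (Suc l) powr (\<mu> + \<beta>) * \<bar>e (Suc l)\<bar>)"
    using \<open>0 \<le> B\<close> e[of "Suc l"] \<mu> by (simp add: mult.assoc mult_left_mono mult_right_mono powr_mono)
  finally show "norm \<bar>a (Suc l) * e (Suc l)\<bar> \<le> B * (real (Suc l) powr (\<mu> + \<beta>) * \<bar>e (Suc l)\<bar>)"
    by simp
qed

lemma coag_rhs_diff_eq:
  assumes "summable (\<lambda>l. \<bar>a k (Suc l) * c (Suc l) t\<bar>)" "summable (\<lambda>l. \<bar>a k (Suc l) * d (Suc l) t\<bar>)"
  shows "coag_rhs a s r c k t - coag_rhs a s r d k t
    = (\<Sum>l=1..k-1. a (k - l) l * (c (k - l) t * c l t - d (k - l) t * d l t)) / 2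
      - (\<Sum>\<^sub>\<infinity>l\<in>{1..}. a k l * (c k t * c l t - d k t * d l t)) - r k * (c k t - d k t)"
proof -
  let ?L = "\<lambda>e. \<Sum>l. a k (Suc l) * e (Suc l) t"
  have "((\<lambda>l. a k l * (c k t * c l t - d k t * d l t)) has_sum c k t * ?L c - d k t * ?L d) {1..}"
    using has_sum_diff[OF has_sum_cmult_right[OF norm_summable_Suc_has_sum[OF assms(1)], of "c k t"]
        has_sum_cmult_right[OF norm_summable_Suc_has_sum[OF assms(2)], of "d k t"]]
    by (simp add: algebra_simps)
  then have loss: "(\<Sum>\<^sub>\<infinity>l\<in>{1..}. a k l * (c k t * c l t - d k t * d l t)) = c k t * ?L c - d k t * ?L d"
    by (rule infsumI)
  have gain: "(\<Sum>l=1..k-1. a (k - l) l * (c (k - l) t * c l t - d (k - l) t * d l t))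
      = (\<Sum>l=1..k-1. a (k - l) l * c (k - l) t * c l t) - (\<Sum>l=1..k-1. a (k - l) l * d (k - l) t * d l t)"
    by (simp add: sum_subtractf[symmetric] algebra_simps)
  show ?thesis
    unfolding coag_rhs_def gain loss by (simp add: algebra_simps diff_divide_distrib)
qed

lemma coag_rhs_diff_weak_form:
  fixes a :: "nat \<Rightarrow> nat \<Rightarrow> real" and r s \<phi> :: "nat \<Rightarrow> real" and c d :: "nat \<Rightarrow> real \<Rightarrow> real"
    and B \<beta> \<mu> t :: real
  assumes a_sym: "\<And>i j. i \<ge> 1 \<Longrightarrow> j \<ge> 1 \<Longrightarrow> a i j = a j i"
    and a_bound: "\<And>i j. i \<ge> 1 \<Longrightarrow> j \<ge> 1 \<Longrightarrow> 0 \<le> a i j \<and> a i j \<le> B * (real i powr \<beta> * real j powr \<beta>)"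
    and nonneg: "\<And>k. k \<ge> 1 \<Longrightarrow> 0 \<le> c k t \<and> 0 \<le> d k t"
    and \<mu>: "\<mu> \<ge> 0"
    and moments: "wsummable (\<mu> + \<beta>) (\<lambda>k. c k t)" "wsummable (\<mu> + \<beta>) (\<lambda>k. d k t)"
    and \<phi>: "\<And>k. \<bar>\<phi> k\<bar> \<le> real k powr \<mu>"
  shows "(\<lambda>(i, j). a i j * (c i t * c j t - d i t * d j t) * (\<phi> (i + j) - \<phi> i - \<phi> j))
      summable_on {1..} \<times> {1..}"
    and "((\<lambda>k. \<phi> k * (coag_rhs a s r c k t - coag_rhs a s r d k t + r k * (c k t - d k t))) has_sum
      (\<Sum>\<^sub>\<infinity>(i, j)\<in>{1..} \<times> {1..}. a i j * (c i t * c j t - d i t * d j t) * (\<phi> (i + j) - \<phi> i - \<phi> j)) / 2)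
      {1..}"
proof -
  let ?F = "\<lambda>i j. a i j * (c i t * c j t - d i t * d j t)"
  have test: "(\<lambda>(i, j). ?F i j * \<psi> i j) summable_on {1..} \<times> {1..}"
    if "\<And>i j. i \<ge> 1 \<Longrightarrow> j \<ge> 1 \<Longrightarrow> \<bar>\<psi> i j\<bar> \<le> real (i + j) powr \<mu>" for \<psi>
    by (rule coagulation_test_summable[OF a_bound nonneg \<mu> moments that])
  have "\<bar>\<phi> m\<bar> \<le> real (i + j) powr \<mu>" if "1 \<le> m" "m \<le> i + j" for i j m
    using \<phi>[of m] powr_mono2[of \<mu> "real m" "real (i + j)"] \<mu> that by auto
  then have gain: "(\<lambda>(i, j). ?F i j * \<phi> (i + j)) summable_on {1..} \<times> {1..}"
    and loss: "(\<lambda>(i, j). ?F i j * \<phi> i) summable_on {1..} \<times> {1..}"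
    using test[of "\<lambda>i j. \<phi> (i + j)"] test[of "\<lambda>i j. \<phi> i"] by auto
  have rhs_eq: "coag_rhs a s r c k t - coag_rhs a s r d k t + r k * (c k t - d k t)
      = (\<Sum>l=1..k-1. ?F (k - l) l) / 2 - (\<Sum>\<^sub>\<infinity>l\<in>{1..}. ?F k l)" if "k \<in> {1..}" for k
  proof -
    have series: "summable (\<lambda>l. \<bar>a k (Suc l) * e (Suc l)\<bar>)"
      if "\<And>l. l \<ge> 1 \<Longrightarrow> 0 \<le> e l" "wsummable (\<mu> + \<beta>) e" for e
      by (rule kernel_series_summable[OF _ that(1) \<mu> that(2), where B="B * real k powr \<beta>"])
        (use a_bound \<open>k \<in> {1..}\<close> in \<open>auto simp: mult.assoc\<close>)
    have "summable (\<lambda>l. \<bar>a k (Suc l) * c (Suc l) t\<bar>)" "summable (\<lambda>l. \<bar>a k (Suc l) * d (Suc l) t\<bar>)"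
      by (rule series, use nonneg moments in auto)+
    from coag_rhs_diff_eq[where a=a and k=k and c=c and d=d and t=t and s=s and r=r, OF this]
    show ?thesis by simp
  qed
  note weak = coagulation_weak_form[OF _ gain loss]
  from weak(1) show "(\<lambda>(i, j). a i j * (c i t * c j t - d i t * d j t) * (\<phi> (i + j) - \<phi> i - \<phi> j))
      summable_on {1..} \<times> {1..}"
    by (simp add: a_sym)
  show "((\<lambda>k. \<phi> k * (coag_rhs a s r c k t - coag_rhs a s r d k t + r k * (c k t - d k t))) has_sum
      (\<Sum>\<^sub>\<infinity>(i, j)\<in>{1..} \<times> {1..}. a i j * (c i t * c j t - d i t * d j t) * (\<phi> (i + j) - \<phi> i - \<phi> j)) / 2)
      {1..}"
    by (rule has_sum_cong[THEN iffD1, OF _ weak(2)]) (simp_all add: rhs_eq a_sym)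
qed

lemma coagulation_moment_le:
  fixes a :: "nat \<Rightarrow> nat \<Rightarrow> real" and C D \<sigma> :: "nat \<Rightarrow> real" and A \<beta> \<mu> :: real
  assumes \<beta>: "0 \<le> \<beta>" "\<beta> \<le> 1" and \<mu>: "\<mu> \<ge> 1"
    and a_bound: "\<And>i j. i \<ge> 1 \<Longrightarrow> j \<ge> 1 \<Longrightarrow> 0 \<le> a i j \<and> a i j \<le> 2 * A * (real i powr \<beta> * real j powr \<beta>)"
    and nonneg: "\<And>k. k \<ge> 1 \<Longrightarrow> 0 \<le> C k \<and> 0 \<le> D k"
    and moments: "wsummable (\<mu> + \<beta>) C" "wsummable (\<mu> + \<beta>) D"
    and \<sigma>: "\<And>k. \<bar>\<sigma> k\<bar> \<le> 1" "\<And>k. \<sigma> k * (C k - D k) = \<bar>C k - D k\<bar>"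
    and summable: "(\<lambda>(i, j). a i j * (C i * C j - D i * D j)
        * (real (i + j) powr \<mu> * \<sigma> (i + j) - real i powr \<mu> * \<sigma> i - real j powr \<mu> * \<sigma> j))
      summable_on {1..} \<times> {1..}"
  shows "(\<Sum>\<^sub>\<infinity>(i, j)\<in>{1..} \<times> {1..}. a i j * (C i * C j - D i * D j)
        * (real (i + j) powr \<mu> * \<sigma> (i + j) - real i powr \<mu> * \<sigma> i - real j powr \<mu> * \<sigma> j))
    \<le> 2 * A * (\<mu> * 2 powr (\<mu> - 1) + 1) * (wnorm \<mu> (\<lambda>k. C k - D k) * wnorm (\<mu> + \<beta>) (\<lambda>k. C k + D k))"
proof -
  define N M where "N = wnorm \<mu> (\<lambda>k. C k - D k)" and "M = wnorm (\<mu> + \<beta>) (\<lambda>k. C k + D k)"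
  define K where "K = 2 * A * (\<mu> * 2 powr (\<mu> - 1) + 1)"
  define H where "H = (\<lambda>(i, j). real i powr \<mu> * \<bar>C i - D i\<bar> * (real j powr (\<mu> + \<beta>) * (C j + D j)))"
  have "wsummable \<mu> (\<lambda>k. C k - D k)"
    using \<beta> by (intro wsummable_diff wsummable_mono_exponent[OF moments(1)] wsummable_mono_exponent[OF moments(2)]) auto
  then have hN: "((\<lambda>k. real k powr \<mu> * \<bar>C k - D k\<bar>) has_sum N) {1..}"
    unfolding N_def by (rule wnorm_has_sum)
  have "((\<lambda>k. real k powr (\<mu> + \<beta>) * \<bar>C k + D k\<bar>) has_sum M) {1..}"
    unfolding M_def by (rule wnorm_has_sum[OF wsummable_add[OF moments]])
  then have hM: "((\<lambda>k. real k powr (\<mu> + \<beta>) * (C k + D k)) has_sum M) {1..}"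
    by (rule has_sum_cong[THEN iffD1, rotated]) (use nonneg in force)
  have "((\<lambda>(i, j). H (i, j) + H (j, i)) has_sum N * M + N * M) ({1..} \<times> {1..})"
    using has_sum_add[OF has_sum_product_nonneg[OF hN hM] has_sum_swap[THEN iffD1, OF has_sum_product_nonneg[OF hN hM]]]
      nonneg by (simp add: case_prod_unfold H_def)
  from has_sum_cmult_right[OF this, of "K / 2"]
  have hH: "((\<lambda>(i, j). K / 2 * (H (i, j) + H (j, i))) has_sum K / 2 * (N * M + N * M)) ({1..} \<times> {1..})"
    by (simp add: case_prod_unfold)
  have "(\<Sum>\<^sub>\<infinity>(i, j)\<in>{1..} \<times> {1..}. a i j * (C i * C j - D i * D j)
        * (real (i + j) powr \<mu> * \<sigma> (i + j) - real i powr \<mu> * \<sigma> i - real j powr \<mu> * \<sigma> j))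
      \<le> K / 2 * (N * M + N * M)"
  proof (rule has_sum_mono[OF has_sum_infsum[OF summable] hH])
    fix p :: "nat \<times> nat" assume "p \<in> {1..} \<times> {1..}"
    then obtain i j where p: "p = (i, j)" and ij: "i \<ge> 1" "j \<ge> 1" by auto
    show "(\<lambda>(i, j). a i j * (C i * C j - D i * D j)
          * (real (i + j) powr \<mu> * \<sigma> (i + j) - real i powr \<mu> * \<sigma> i - real j powr \<mu> * \<sigma> j)) p
        \<le> (\<lambda>(i, j). K / 2 * (H (i, j) + H (j, i))) p"
      using coagulation_increment_le[where x="real i" and y="real j" and \<mu>=\<mu> and \<beta>=\<beta> and a="a i j" and B="2 * A"
          and \<sigma>\<^sub>0="\<sigma> (i + j)" and \<sigma>\<^sub>1="\<sigma> i" and \<sigma>\<^sub>2="\<sigma> j" and c\<^sub>1="C i" and c\<^sub>2="C j"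
          and d\<^sub>1="D i" and d\<^sub>2="D j"] ij \<mu> \<beta> a_bound[OF ij] \<sigma> nonneg[OF ij(1)] nonneg[OF ij(2)]
      by (simp add: p H_def K_def)
  qed
  also have "\<dots> = K * (N * M)"
    by (simp add: algebra_simps)
  finally show ?thesis
    by (simp add: K_def N_def M_def)
qed

lemma coag_rhs_diff_moment_le:
  fixes a :: "nat \<Rightarrow> nat \<Rightarrow> real" and r s \<sigma> :: "nat \<Rightarrow> real" and c d :: "nat \<Rightarrow> real \<Rightarrow> real"
    and A R \<beta> \<mu> t :: real
  assumes \<beta>: "0 \<le> \<beta>" "\<beta> \<le> 1" and \<mu>: "\<mu> \<ge> 1"
    and a_sym: "\<And>i j. i \<ge> 1 \<Longrightarrow> j \<ge> 1 \<Longrightarrow> a i j = a j i"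
    and a_bound: "\<And>i j. i \<ge> 1 \<Longrightarrow> j \<ge> 1 \<Longrightarrow> 0 \<le> a i j \<and> a i j \<le> 2 * A * (real i powr \<beta> * real j powr \<beta>)"
    and r_ge: "\<And>k. k \<ge> 1 \<Longrightarrow> R \<le> r k"
    and nonneg: "\<And>k. k \<ge> 1 \<Longrightarrow> 0 \<le> c k t \<and> 0 \<le> d k t"
    and moments: "wsummable (\<mu> + \<beta>) (\<lambda>k. c k t)" "wsummable (\<mu> + \<beta>) (\<lambda>k. d k t)"
    and \<sigma>: "\<And>k. \<bar>\<sigma> k\<bar> \<le> 1" "\<And>k. \<sigma> k * (c k t - d k t) = \<bar>c k t - d k t\<bar>"
    and rhs: "wsummable \<mu> (\<lambda>k. coag_rhs a s r c k t - coag_rhs a s r d k t)"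
  shows "(\<Sum>k. real (Suc k) powr \<mu> * (\<sigma> (Suc k) * (coag_rhs a s r c (Suc k) t - coag_rhs a s r d (Suc k) t)))
    \<le> (A * (\<mu> * 2 powr (\<mu> - 1) + 1) * wnorm (\<mu> + \<beta>) (\<lambda>k. c k t + d k t) - R) * wnorm \<mu> (\<lambda>k. c k t - d k t)"
proof -
  define W E y where "W k = real k powr \<mu>" and "E k = c k t - d k t"
    and "y k = coag_rhs a s r c k t - coag_rhs a s r d k t" for k
  define N M Y where "N = wnorm \<mu> E" and "M = wnorm (\<mu> + \<beta>) (\<lambda>k. c k t + d k t)"
    and "Y = (\<Sum>k. W (Suc k) * (\<sigma> (Suc k) * y (Suc k)))"
  define K where "K = \<mu> * 2 powr (\<mu> - 1) + 1"
  define I where "I = (\<Sum>\<^sub>\<infinity>(i, j)\<in>{1..} \<times> {1..}.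
    a i j * (c i t * c j t - d i t * d j t) * (W (i + j) * \<sigma> (i + j) - W i * \<sigma> i - W j * \<sigma> j))"
  have "wsummable \<mu> E"
    unfolding E_def using \<beta> by (intro wsummable_diff wsummable_mono_exponent[OF moments(1)] wsummable_mono_exponent[OF moments(2)]) auto
  then have hN: "((\<lambda>k. W k * \<bar>E k\<bar>) has_sum N) {1..}"
    unfolding W_def N_def by (rule wnorm_has_sum)
  have hY: "((\<lambda>k. W k * (\<sigma> k * y k)) has_sum Y) {1..}"
    unfolding Y_def
  proof (rule norm_summable_Suc_has_sum, rule summable_comparison_test'[OF rhs[unfolded wsummable_def]])
    show "norm \<bar>W (Suc k) * (\<sigma> (Suc k) * y (Suc k))\<bar>
        \<le> real (Suc k) powr \<mu> * \<bar>coag_rhs a s r c (Suc k) t - coag_rhs a s r d (Suc k) t\<bar>" for k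
      using \<sigma>(1)[of "Suc k"] by (simp add: W_def y_def abs_mult mult_left_le_one_le)
  qed
  have \<phi>: "\<bar>W k * \<sigma> k\<bar> \<le> real k powr \<mu>" for k
    using \<sigma>(1)[of k] by (simp add: W_def abs_mult mult_right_le_one_le)
  note weak = coag_rhs_diff_weak_form[where \<phi>="\<lambda>k. W k * \<sigma> k" and B="2 * A" and a=a and c=c and d=d
      and t=t and \<mu>=\<mu> and \<beta>=\<beta>, OF a_sym a_bound nonneg order_trans[OF zero_le_one \<mu>] moments \<phi>]
  have "((\<lambda>k. W k * \<sigma> k * (y k + r k * E k) - W k * (\<sigma> k * y k)) has_sum I / 2 - Y) {1..}"
    using has_sum_diff[OF weak(2)[where s=s and r=r] hY] by (simp add: I_def E_def y_def)
  moreover have "W k * \<sigma> k * (y k + r k * E k) - W k * (\<sigma> k * y k) = r k * (W k * \<bar>E k\<bar>)" for k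
  proof -
    have "W k * \<sigma> k * (y k + r k * E k) - W k * (\<sigma> k * y k) = r k * (W k * (\<sigma> k * E k))"
      by (simp add: algebra_simps)
    then show ?thesis using \<sigma>(2) by (simp add: E_def)
  qed
  ultimately have "((\<lambda>k. r k * (W k * \<bar>E k\<bar>)) has_sum I / 2 - Y) {1..}"
    by simp
  then have "R * N \<le> I / 2 - Y"
    by (rule has_sum_mono[OF has_sum_cmult_right[OF hN]]) (use r_ge in \<open>auto simp: W_def intro!: mult_right_mono\<close>)
  moreover have "I \<le> 2 * A * K * (N * M)"
    unfolding I_def N_def M_def K_def E_def[abs_def] W_def
    by (rule coagulation_moment_le[OF \<beta> \<mu> a_bound nonneg moments \<sigma> weak(1)[unfolded W_def]])
  ultimately have "Y \<le> 2 * A * K * (N * M) / 2 - R * N"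
    by linarith
  also have "\<dots> = (A * K * M - R) * N"
    by (simp add: algebra_simps)
  finally show ?thesis
    by (simp only: Y_def y_def N_def M_def K_def W_def E_def[abs_def])
qed

section \<open>Global solutions\<close>

lemma global_solution_nonneg:
  "is_global_solution a s r c \<Longrightarrow> k \<ge> 1 \<Longrightarrow> t \<ge> 0 \<Longrightarrow> 0 \<le> c k t"
  unfolding is_global_solution_def by blast

lemma global_solution_wsummable:
  assumes "is_global_solution a s r c" "\<mu> \<ge> 1" "t > 0"
  shows "wsummable \<mu> (\<lambda>k. c k t)"
  using assms(1)[unfolded is_global_solution_def, THEN conjunct2, THEN conjunct2, THEN conjunct2,
      rule_format, OF assms(2)] assms(3) by blast

lemma global_solution_wnorm_derivative:
  assumes sol: "is_global_solution a s r c" and \<mu>: "\<mu> \<ge> 1" and t: "t > 0"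
  shows "wsummable \<mu> (\<lambda>k. coag_rhs a s r c k t)"
    and "((\<lambda>h. wnorm \<mu> (\<lambda>k. (c k h - c k t) / (h - t) - coag_rhs a s r c k t)) \<longlongrightarrow> 0) (at t)"
proof -
  note sol_def = sol[unfolded is_global_solution_def]
  obtain c' where ws': "wsummable \<mu> (\<lambda>k. c' k t)"
    and lim: "((\<lambda>h. wnorm \<mu> (\<lambda>k. (c k h - c k t) / (h - t) - c' k t)) \<longlongrightarrow> 0) (at t)"
    using sol_def[THEN conjunct2, THEN conjunct2, THEN conjunct2, rule_format, OF \<mu>] t by blast
  note ws = global_solution_wsummable[OF sol \<mu>]
  have c'_eq: "c' k t = coag_rhs a s r c k t" if k: "k \<ge> 1" for k
  proof -
    have "((\<lambda>h. (c k h - c k t) / (h - t) - c' k t) \<longlongrightarrow> 0) (at t)"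
    proof (rule Lim_null_comparison[OF _ lim])
      show "\<forall>\<^sub>F h in at t. norm ((c k h - c k t) / (h - t) - c' k t)
          \<le> wnorm \<mu> (\<lambda>k. (c k h - c k t) / (h - t) - c' k t)"
        using order_tendstoD(1)[OF tendsto_ident_at t]
      proof eventually_elim
        case (elim h)
        have "wsummable \<mu> (\<lambda>k. (c k h - c k t) / (h - t) - c' k t)"
          by (intro wsummable_diff wsummable_divide ws ws' elim t)
        from abs_le_wnorm[OF this order_trans[OF zero_le_one \<mu>] k] show ?case by simp
      qed
    qed
    then have "((\<lambda>h. (c k h - c k t) / (h - t)) \<longlongrightarrow> c' k t) (at t)"
      by (simp add: Lim_null[symmetric])
    moreover have "((\<lambda>h. (c k h - c k t) / (h - t)) \<longlongrightarrow> coag_rhs a s r c k t) (at t)"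
      using sol_def[THEN conjunct2, THEN conjunct1, rule_format, OF k t] by (simp add: has_field_derivative_iff)
    ultimately show ?thesis by (rule tendsto_unique[OF trivial_limit_at])
  qed
  show "wsummable \<mu> (\<lambda>k. coag_rhs a s r c k t)"
    using ws' wsummable_cong(1)[of "\<lambda>k. c' k t" "\<lambda>k. coag_rhs a s r c k t"] c'_eq by simp
  have "wnorm \<mu> (\<lambda>k. (c k h - c k t) / (h - t) - c' k t)
      = wnorm \<mu> (\<lambda>k. (c k h - c k t) / (h - t) - coag_rhs a s r c k t)" for h
    by (rule wsummable_cong(2)) (simp add: c'_eq)
  with lim show "((\<lambda>h. wnorm \<mu> (\<lambda>k. (c k h - c k t) / (h - t) - coag_rhs a s r c k t)) \<longlongrightarrow> 0) (at t)"
    by simp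
qed

lemma upper_right_dini_wnorm_diff_solutions:
  assumes c_sol: "is_global_solution a s r c" and d_sol: "is_global_solution a s r d"
    and \<mu>: "\<mu> \<ge> 1" and t: "t > 0"
  shows "upper_right_dini (\<lambda>\<tau>. wnorm \<mu> (\<lambda>k. c k \<tau> - d k \<tau>)) t
    = ereal (\<Sum>k. real (Suc k) powr \<mu> * abs_right_deriv (c (Suc k) t - d (Suc k) t)
                   (coag_rhs a s r c (Suc k) t - coag_rhs a s r d (Suc k) t))"
proof -
  define x where "x h k = c k h - d k h" for h k
  define y where "y k = coag_rhs a s r c k t - coag_rhs a s r d k t" for k
  note c' = global_solution_wnorm_derivative[OF c_sol \<mu> t]
  note d' = global_solution_wnorm_derivative[OF d_sol \<mu> t]
  note wc = global_solution_wsummable[OF c_sol \<mu>] and wd = global_solution_wsummable[OF d_sol \<mu>]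
  have wx: "wsummable \<mu> (x h)" if "h \<ge> t" for h
    unfolding x_def using that t by (intro wsummable_diff wc wd) auto
  have wy: "wsummable \<mu> y"
    unfolding y_def using c'(1) d'(1) by (rule wsummable_diff)
  have "((\<lambda>h. wnorm \<mu> (\<lambda>k. (x h k - x t k) / (h - t) - y k)) \<longlongrightarrow> 0) (at t)"
  proof (rule Lim_null_comparison[OF _ tendsto_add_zero[OF c'(2) d'(2)]])
    show "\<forall>\<^sub>F h in at t. norm (wnorm \<mu> (\<lambda>k. (x h k - x t k) / (h - t) - y k))
        \<le> wnorm \<mu> (\<lambda>k. (c k h - c k t) / (h - t) - coag_rhs a s r c k t)
          + wnorm \<mu> (\<lambda>k. (d k h - d k t) / (h - t) - coag_rhs a s r d k t)"
      using order_tendstoD(1)[OF tendsto_ident_at t]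
    proof eventually_elim
      case (elim h)
      have qc: "wsummable \<mu> (\<lambda>k. (c k h - c k t) / (h - t) - coag_rhs a s r c k t)"
        using elim t by (intro wsummable_diff wsummable_divide wc c'(1))
      have qd: "wsummable \<mu> (\<lambda>k. (d k h - d k t) / (h - t) - coag_rhs a s r d k t)"
        using elim t by (intro wsummable_diff wsummable_divide wd d'(1))
      have "(\<lambda>k. (x h k - x t k) / (h - t) - y k)
          = (\<lambda>k. ((c k h - c k t) / (h - t) - coag_rhs a s r c k t) - ((d k h - d k t) / (h - t) - coag_rhs a s r d k t))"
        by (simp add: fun_eq_iff x_def y_def diff_divide_distrib)
      then show ?case
        using wnorm_diff_le[OF qc qd] wnorm_nonneg[OF wsummable_diff[OF qc qd]] by simp
    qed
  qed
  then have "((\<lambda>h. wnorm \<mu> (\<lambda>k. (x h k - x t k) / (h - t) - y k)) \<longlongrightarrow> 0) (at_right t)"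
    by (rule tendsto_within_subset) simp
  from wnorm_right_derivative[OF wx wy this]
  show ?thesis
    unfolding upper_right_dini_def
    by (intro lim_imp_Limsup trivial_limit_at_right_real) (simp add: tendsto_ereal x_def y_def)
qed

lemma upper_right_dini_wnorm_solutions_le:
  fixes A R \<beta> \<mu> t :: real
  assumes c_sol: "is_global_solution a s r c" and d_sol: "is_global_solution a s r d"
    and \<beta>: "0 \<le> \<beta>" "\<beta> \<le> 1" and \<mu>: "\<mu> \<ge> 1" and t: "t > 0"
    and a_sym: "\<And>i j. i \<ge> 1 \<Longrightarrow> j \<ge> 1 \<Longrightarrow> a i j = a j i"
    and a_bound: "\<And>i j. i \<ge> 1 \<Longrightarrow> j \<ge> 1 \<Longrightarrow> 0 \<le> a i j \<and> a i j \<le> 2 * A * (real i powr \<beta> * real j powr \<beta>)"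
    and r_ge: "\<And>k. k \<ge> 1 \<Longrightarrow> R \<le> r k"
  shows "upper_right_dini (\<lambda>\<tau>. wnorm \<mu> (\<lambda>k. c k \<tau> - d k \<tau>)) t
    \<le> ereal ((A * (\<mu> * 2 powr (\<mu> - 1) + 1) * wnorm (\<mu> + \<beta>) (\<lambda>k. c k t + d k t) - R) * wnorm \<mu> (\<lambda>k. c k t - d k t))"
proof -
  define \<sigma> where "\<sigma> k = (if c k t - d k t = 0 then sgn (coag_rhs a s r c k t - coag_rhs a s r d k t)
    else sgn (c k t - d k t))" for k
  have \<sigma>: "\<bar>\<sigma> k\<bar> \<le> 1" "\<sigma> k * (c k t - d k t) = \<bar>c k t - d k t\<bar>" for k
    unfolding \<sigma>_def by (simp_all add: abs_sgn mult.commute)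
  have nonneg: "0 \<le> c k t \<and> 0 \<le> d k t" if "k \<ge> 1" for k
    using global_solution_nonneg[OF c_sol that] global_solution_nonneg[OF d_sol that] t by simp
  have moments: "wsummable (\<mu> + \<beta>) (\<lambda>k. c k t)" "wsummable (\<mu> + \<beta>) (\<lambda>k. d k t)"
    using global_solution_wsummable[OF c_sol _ t] global_solution_wsummable[OF d_sol _ t] \<mu> \<beta> by auto
  have rhs: "wsummable \<mu> (\<lambda>k. coag_rhs a s r c k t - coag_rhs a s r d k t)"
    using global_solution_wnorm_derivative(1)[OF c_sol \<mu> t] global_solution_wnorm_derivative(1)[OF d_sol \<mu> t]
    by (rule wsummable_diff)
  have "(\<Sum>k. real (Suc k) powr \<mu> * abs_right_deriv (c (Suc k) t - d (Suc k) t)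
            (coag_rhs a s r c (Suc k) t - coag_rhs a s r d (Suc k) t))
      = (\<Sum>k. real (Suc k) powr \<mu> * (\<sigma> (Suc k) * (coag_rhs a s r c (Suc k) t - coag_rhs a s r d (Suc k) t)))"
    by (simp only: abs_right_deriv_eq_sgn \<sigma>_def mult.assoc)
  also have "\<dots> \<le> (A * (\<mu> * 2 powr (\<mu> - 1) + 1) * wnorm (\<mu> + \<beta>) (\<lambda>k. c k t + d k t) - R)
      * wnorm \<mu> (\<lambda>k. c k t - d k t)"
    by (rule coag_rhs_diff_moment_le[OF \<beta> \<mu> a_sym a_bound r_ge nonneg moments \<sigma> rhs])
  finally show ?thesis
    unfolding upper_right_dini_wnorm_diff_solutions[OF c_sol d_sol \<mu> t] by simp
qed

theorem mainTheorem13: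
  fixes a :: "nat \<Rightarrow> nat \<Rightarrow> real" and r s :: "nat \<Rightarrow> real"
    and A\<^sub>s R\<^sub>s \<alpha> \<beta> \<gamma> :: real
    and c d :: "nat \<Rightarrow> real \<Rightarrow> real" and \<mu> :: real
  assumes A_pos: "A\<^sub>s > 0"
    and alpha_beta: "0 \<le> \<alpha>" "\<alpha> \<le> \<beta>" "\<beta> \<le> 1"
    and a_sym: "\<And>k l. k \<ge> 1 \<Longrightarrow> l \<ge> 1 \<Longrightarrow> a k l = a l k"
    and a_bound: "\<And>k l. k \<ge> 1 \<Longrightarrow> l \<ge> 1 \<Longrightarrow>
        0 \<le> a k l \<and> a k l \<le> A\<^sub>s * (real k powr \<alpha> * real l powr \<beta> + real k powr \<beta> * real l powr \<alpha>)"
    and R_pos: "R\<^sub>s > 0"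
    and gamma: "\<gamma> > max 0 (\<alpha> + \<beta> - 1)"
    and r_bound: "\<And>k. k \<ge> 1 \<Longrightarrow> r k \<ge> R\<^sub>s * real k powr \<gamma>"
    and s_nonneg: "\<And>k. k \<ge> 1 \<Longrightarrow> s k \<ge> 0"
    and s_moments: "\<And>\<nu>. \<nu> \<ge> 0 \<Longrightarrow> \<exists>\<ss>>0.
        summable (\<lambda>k. real (Suc k) powr \<nu> * s (Suc k)) \<and>
        (\<Sum>k. real (Suc k) powr \<nu> * s (Suc k)) \<le> \<ss>"
    and c_sol: "is_global_solution a s r c"
    and d_sol: "is_global_solution a s r d"
    and mu: "\<mu> \<ge> 1"
  shows "\<forall>t>0.
    upper_right_dini (\<lambda>\<tau>. wnorm \<mu> (\<lambda>k. c k \<tau> - d k \<tau>)) t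
    \<le> ereal ((2 * A\<^sub>s * (2 powr (max (\<mu> - 2) 0) * max \<mu> (\<mu> * (\<mu> - 1)) + 2)
              * (\<Sum>l. real (Suc l) powr (\<mu> + \<beta>) * (c (Suc l) t + d (Suc l) t)) - R\<^sub>s)
             * wnorm \<mu> (\<lambda>k. c k t - d k t))"
proof (intro allI impI)
  fix t :: real assume t: "t > 0"
  define M where "M = wnorm (\<mu> + \<beta>) (\<lambda>k. c k t + d k t)"
  define C\<^sub>\<mu> where "C\<^sub>\<mu> = 2 powr (max (\<mu> - 2) 0) * max \<mu> (\<mu> * (\<mu> - 1))"
  have kernel: "0 \<le> a k l \<and> a k l \<le> 2 * A\<^sub>s * (real k powr \<beta> * real l powr \<beta>)" if "k \<ge> 1" "l \<ge> 1" for k l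
  proof -
    have "A\<^sub>s * (real k powr \<alpha> * real l powr \<beta> + real k powr \<beta> * real l powr \<alpha>)
        \<le> 2 * A\<^sub>s * (real k powr \<beta> * real l powr \<beta>)"
      by (rule powr_cross_sum_le) (use that alpha_beta A_pos in auto)
    with a_bound[OF that] show ?thesis by linarith
  qed
  have r_ge: "R\<^sub>s \<le> r k" if "k \<ge> 1" for k
  proof -
    have "1 \<le> real k powr \<gamma>" by (rule ge_one_powr_ge_zero) (use that gamma in auto)
    from mult_left_mono[OF this less_imp_le[OF R_pos]] r_bound[OF that] show ?thesis by linarith
  qed
  have M: "M \<ge> 0" and N: "wnorm \<mu> (\<lambda>k. c k t - d k t) \<ge> 0"
    unfolding M_def using global_solution_wsummable[OF c_sol _ t] global_solution_wsummable[OF d_sol _ t] mu alpha_beta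
    by (auto intro!: wnorm_nonneg wsummable_add wsummable_diff)
  have "M = (\<Sum>l. real (Suc l) powr (\<mu> + \<beta>) * (c (Suc l) t + d (Suc l) t))"
    unfolding M_def
    using global_solution_nonneg[OF c_sol _ less_imp_le[OF t]] global_solution_nonneg[OF d_sol _ less_imp_le[OF t]]
    by (intro wnorm_eq_suminf) auto
  moreover have "upper_right_dini (\<lambda>\<tau>. wnorm \<mu> (\<lambda>k. c k \<tau> - d k \<tau>)) t
      \<le> ereal ((A\<^sub>s * (\<mu> * 2 powr (\<mu> - 1) + 1) * M - R\<^sub>s) * wnorm \<mu> (\<lambda>k. c k t - d k t))"
    unfolding M_def using alpha_beta
    by (intro upper_right_dini_wnorm_solutions_le[OF c_sol d_sol _ _ mu t a_sym kernel r_ge]) auto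
  moreover have "A\<^sub>s * (\<mu> * 2 powr (\<mu> - 1) + 1) * M \<le> 2 * A\<^sub>s * (C\<^sub>\<mu> + 2) * M"
    using mult_right_mono[OF mult_left_mono[OF moment_constant_le[OF mu] less_imp_le[OF A_pos]] M]
    by (simp only: C\<^sub>\<mu>_def mult_ac)
  ultimately show "upper_right_dini (\<lambda>\<tau>. wnorm \<mu> (\<lambda>k. c k \<tau> - d k \<tau>)) t
    \<le> ereal ((2 * A\<^sub>s * (2 powr (max (\<mu> - 2) 0) * max \<mu> (\<mu> * (\<mu> - 1)) + 2)
              * (\<Sum>l. real (Suc l) powr (\<mu> + \<beta>) * (c (Suc l) t + d (Suc l) t)) - R\<^sub>s)
             * wnorm \<mu> (\<lambda>k. c k t - d k t))"
    using N by (auto simp: C\<^sub>\<mu>_def elim!: order_trans intro!: mult_right_mono)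
qed

end
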